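(* In the setting of the context with equal cluster sizes $n_1=\dots=n_k=n/k$, suppose $n\ge\frac{2k(1-\eta)}{1-2\eta}$. Then: (1) If $\tau^+>0,\tau^-\ge0$ satisfy $\tau^+>\frac{32\eta k}{3(1-2\eta)}$ and $\tau^-<\min\{\frac32,\frac3{16}\tau^+,\frac{3(1-\eta)}{8(\eta+\frac{1-2\eta}k)}\}$, then $V_k(\bar T)=\Theta R$ for a $k\times k$ rotation $R$, and $\|(C_e^-)^{-1/2}C_e^+(C_e^-)^{-1/2}\|<\left(1-\frac{1-2\eta}{2k(1-\eta)}\right)\frac{\alpha^+}{\alpha^-}$, i.e. $\lambda_{n-k}(\bar T)-\lambda_{n-k+1}(\bar T)>\frac{1-2\eta}{2k(1-\eta)}\frac{\alpha^+}{\alpha^-}$. (2) If $\eta<\frac1{3k+2}$ and $\tau^+>0,\tau^-\ge0$ satisfy $\tau^-<\min\left\{\frac{\frac{1-2\eta}k-\eta}{\frac{1-2\eta}k+\eta},\frac12,\frac{\tau^+}8\right\}$, then $V_k(\bar T)=\Theta R$ and $\|(C_e^-)^{-1/2}C_e^+(C_e^-)^{-1/2}\|<\frac{\alpha^+}{2\alpha^-}$, i.e. $\lambda_{n-k}(\bar T)-\lambda_{n-k+1}(\bar T)>\frac{\alpha^+}{2\alpha^-}$.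
   Context: SSBM: integers $n\ge2$, $k\ge2$, $p\in(0,1]$, $\eta\in[0,1/2)$, partition of $[n]$ into clusters $C_1,\dots,C_k$ each of size $n/k$; edges present independently w.p. $p$, signed $+1$ within and $-1$ across clusters, signs flipped independently w.p. $\eta$. $A^\pm$ positive/negative adjacency matrices, $D^\pm=\mathrm{diag}(A^\pm\mathbf1)$. $\Theta_{ji}=\sqrt{k/n}$ if $j\in C_i$ else 0. $\overline{L^\pm_{sym}}=I-(\mathbb ED^\pm)^{-1/2}\mathbb EA^\pm(\mathbb ED^\pm)^{-1/2}$, $\bar T=(\overline{L^-_{sym}}+\tau^+I)^{-1/2}(\overline{L^+_{sym}}+\tau^-I)(\overline{L^-_{sym}}+\tau^+I)^{-1/2}$, eigenvalues $\lambda_1(\bar T)\ge\dots\ge\lambda_n(\bar T)$, $V_k(\bar T)$ orthonormal eigenvectors of the $k$ smallest. Expected degrees $d^+=p(\frac nk(1-2\eta)+n\eta-(1-\eta))$, $d^-=p(n(1-\eta)-\frac nk(1-2\eta)-\eta)$; $\alpha^+=1+\tau^-+p(1-\eta)/d^+$, $\alpha^-=1+\tau^++p\eta/d^-$. With $\chi_1=\frac1{\sqrt k}\mathbf1_k$: $C_e^+=-p\eta\frac n{d^+}\chi_1\chi_1^\top+\big(1+\tau^-+\frac p{d^+}(1-\eta-\frac nk(1-2\eta))\big)I_k$, $C_e^-=-p(1-\eta)\frac n{d^-}\chi_1\chi_1^\top+\big(1+\tau^++\frac p{d^-}(\eta+\frac nk(1-2\eta))\big)I_k$. *)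

theory Defs
  imports "Jordan_Normal_Form.Char_Poly"
begin

definition vnorm :: "real vec \<Rightarrow> real" where
  "vnorm v = sqrt (v \<bullet> v)"

definition op_norm :: "real mat \<Rightarrow> real" where
  "op_norm M = Sup {vnorm (M *\<^sub>v v) | v. v \<in> carrier_vec (dim_col M) \<and> vnorm v = 1}"

definition posdef :: "real mat \<Rightarrow> bool" where
  "posdef S \<longleftrightarrow> (\<forall>v \<in> carrier_vec (dim_row S). v \<noteq> 0\<^sub>v (dim_row S) \<longrightarrow> v \<bullet> (S *\<^sub>v v) > 0)"

definition mat_inv_sqrt :: "real mat \<Rightarrow> real mat" where
  "mat_inv_sqrt A = (THE S. S \<in> carrier_mat (dim_row A) (dim_row A) \<and> transpose_mat S = S
      \<and> posdef S \<and> S * S * A = 1\<^sub>m (dim_row A))"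

text \<open>Eigenvalues (with algebraic multiplicity) of a real square matrix all of whose
  eigenvalues are real, listed in non-increasing order:
  \<open>eigvals_desc A ! (i-1) = \<lambda>_i(A)\<close>, so \<open>\<lambda>_1 \<ge> \<dots> \<ge> \<lambda>_n\<close>.\<close>
definition eigvals_desc :: "real mat \<Rightarrow> real list" where
  "eigvals_desc A = (THE ls. length ls = dim_row A \<and> sorted_wrt (\<ge>) ls
      \<and> char_poly A = prod_list (map (\<lambda>a. [:- a, 1:]) ls))"

definition deg_mat :: "real mat \<Rightarrow> real mat" where
  "deg_mat A = mat (dim_row A) (dim_row A)
      (\<lambda>(i,j). if i = j then (\<Sum>l<dim_col A. A $$ (i,l)) else 0)"

definition sym_laplacian :: "real mat \<Rightarrow> real mat \<Rightarrow> real mat" where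
  "sym_laplacian D A = 1\<^sub>m (dim_row A) - mat_inv_sqrt D * A * mat_inv_sqrt D"

text \<open>Nodes are \<open>0..<n\<close>, clusters are \<open>0..<k\<close>; \<open>c j\<close> is the cluster of node \<open>j\<close>.
  Expected positive / negative adjacency matrices (no self loops): an edge is present
  w.p. \<open>p\<close>; it is positive within clusters and negative across clusters, and its sign
  is flipped w.p. \<open>\<eta>\<close>.\<close>
definition EAp :: "nat \<Rightarrow> real \<Rightarrow> real \<Rightarrow> (nat \<Rightarrow> nat) \<Rightarrow> real mat" where
  "EAp n p eta c = mat n n (\<lambda>(i,j). if i = j then 0
       else if c i = c j then p * (1 - eta) else p * eta)"

definition EAm :: "nat \<Rightarrow> real \<Rightarrow> real \<Rightarrow> (nat \<Rightarrow> nat) \<Rightarrow> real mat" where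
  "EAm n p eta c = mat n n (\<lambda>(i,j). if i = j then 0
       else if c i = c j then p * eta else p * (1 - eta))"

definition Theta :: "nat \<Rightarrow> nat \<Rightarrow> (nat \<Rightarrow> nat) \<Rightarrow> real mat" where
  "Theta n k c = mat n k (\<lambda>(j,i). if c j = i then sqrt (real k / real n) else 0)"

definition Lp_bar :: "nat \<Rightarrow> real \<Rightarrow> real \<Rightarrow> (nat \<Rightarrow> nat) \<Rightarrow> real mat" where
  "Lp_bar n p eta c = sym_laplacian (deg_mat (EAp n p eta c)) (EAp n p eta c)"

definition Lm_bar :: "nat \<Rightarrow> real \<Rightarrow> real \<Rightarrow> (nat \<Rightarrow> nat) \<Rightarrow> real mat" where
  "Lm_bar n p eta c = sym_laplacian (deg_mat (EAm n p eta c)) (EAm n p eta c)"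

definition T_bar :: "nat \<Rightarrow> real \<Rightarrow> real \<Rightarrow> (nat \<Rightarrow> nat) \<Rightarrow> real \<Rightarrow> real \<Rightarrow> real mat" where
  "T_bar n p eta c taup taum =
     (let S = mat_inv_sqrt (Lm_bar n p eta c + taup \<cdot>\<^sub>m 1\<^sub>m n)
      in S * (Lp_bar n p eta c + taum \<cdot>\<^sub>m 1\<^sub>m n) * S)"

text \<open>\<open>V\<close> is an admissible \<open>V_k(T)\<close>: an \<open>n \<times> k\<close> matrix with orthonormal columns, column \<open>j\<close>
  (0-based) being an eigenvector for \<open>\<lambda>_{n-k+1+j}(T)\<close>, i.e. the columns are orthonormal
  eigenvectors for the \<open>k\<close> smallest eigenvalues.\<close>
definition is_Vk :: "nat \<Rightarrow> nat \<Rightarrow> real mat \<Rightarrow> real mat \<Rightarrow> bool" where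
  "is_Vk n k T V \<longleftrightarrow> V \<in> carrier_mat n k \<and> transpose_mat V * V = 1\<^sub>m k
     \<and> (\<forall>j<k. T *\<^sub>v col V j = (eigvals_desc T ! (n - k + j)) \<cdot>\<^sub>v col V j)"

definition dp :: "nat \<Rightarrow> nat \<Rightarrow> real \<Rightarrow> real \<Rightarrow> real" where
  "dp n k p eta = p * (real n / real k * (1 - 2*eta) + real n * eta - (1 - eta))"

definition dm :: "nat \<Rightarrow> nat \<Rightarrow> real \<Rightarrow> real \<Rightarrow> real" where
  "dm n k p eta = p * (real n * (1 - eta) - real n / real k * (1 - 2*eta) - eta)"

definition alphap :: "nat \<Rightarrow> nat \<Rightarrow> real \<Rightarrow> real \<Rightarrow> real \<Rightarrow> real" where
  "alphap n k p eta taum = 1 + taum + p * (1 - eta) / dp n k p eta"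

definition alpham :: "nat \<Rightarrow> nat \<Rightarrow> real \<Rightarrow> real \<Rightarrow> real \<Rightarrow> real" where
  "alpham n k p eta taup = 1 + taup + p * eta / dm n k p eta"

definition chi1_outer :: "nat \<Rightarrow> real mat" where
  "chi1_outer k = (let chi = vec k (\<lambda>_. 1 / sqrt (real k)) in
      mat k k (\<lambda>(i,j). chi $ i * chi $ j))"

definition Cep :: "nat \<Rightarrow> nat \<Rightarrow> real \<Rightarrow> real \<Rightarrow> real \<Rightarrow> real mat" where
  "Cep n k p eta taum =
     (- p * eta * real n / dp n k p eta) \<cdot>\<^sub>m chi1_outer k
     + (1 + taum + p / dp n k p eta * (1 - eta - real n / real k * (1 - 2*eta))) \<cdot>\<^sub>m 1\<^sub>m k"

definition Cem :: "nat \<Rightarrow> nat \<Rightarrow> real \<Rightarrow> real \<Rightarrow> real \<Rightarrow> real mat" where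
  "Cem n k p eta taup =
     (- p * (1 - eta) * real n / dm n k p eta) \<cdot>\<^sub>m chi1_outer k
     + (1 + taup + p / dm n k p eta * (eta + real n / real k * (1 - 2*eta))) \<cdot>\<^sub>m 1\<^sub>m k"

definition Ce_mat :: "nat \<Rightarrow> nat \<Rightarrow> real \<Rightarrow> real \<Rightarrow> real \<Rightarrow> real \<Rightarrow> real mat" where
  "Ce_mat n k p eta taup taum =
     mat_inv_sqrt (Cem n k p eta taup) * Cep n k p eta taum * mat_inv_sqrt (Cem n k p eta taup)"

end

theory Submission
  imports Defs
begin

text \<open>All matrices in the statement lie in the commutative algebra spanned by three orthogonal
  projections: onto the constant vector, onto the cluster indicators orthogonal to it, and onto
  the vectors summing to zero on every cluster. Products, inverse square roots, determinants and
  spectra are computed coordinatewise in this basis. Hence \<open>T_bar\<close> has the eigenvalues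
  \<open>\<tau>^-/\<tau>^+\<close> (on the constant vector), \<open>\<beta>^+/\<beta>^-\<close> (multiplicity \<open>k-1\<close>) and \<open>\<alpha>^+/\<alpha>^-\<close>
  (multiplicity \<open>n-k\<close>), and the \<open>k \<times> k\<close> matrix \<open>(C_e^-)^(-1/2) C_e^+ (C_e^-)^(-1/2)\<close> has the
  first two. Both parts reduce to the scalar inequalities \<open>\<tau>^-/\<tau>^+ < c \<alpha>^+/\<alpha>^-\<close> and
  \<open>\<beta>^+/\<beta>^- < c \<alpha>^+/\<alpha>^-\<close>, with \<open>c = 1 - (1-2\<eta>)/(2k(1-\<eta>))\<close> resp. \<open>c = 1/2\<close>. Then the \<open>k\<close>
  smallest eigenvalues differ from \<open>\<alpha>^+/\<alpha>^-\<close>, so their eigenvectors are combinations of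
  cluster indicators, i.e. of the columns of \<open>\<Theta>\<close>.\<close>

section \<open>Determinants, square roots and sorted spectra\<close>

text \<open>Sylvester's determinant identity: both block-triangular factorisations of
  \<open>[[1, -U], [W, 1]]\<close> compute its determinant.\<close>
lemma det_one_add_mult_swap:
  fixes U W :: "'a :: idom mat"
  assumes U: "U \<in> carrier_mat n k" and W: "W \<in> carrier_mat k n"
  shows "det (1\<^sub>m n + U * W) = det (1\<^sub>m k + W * U)"
proof -
  define M where "M = four_block_mat (1\<^sub>m n) (- U) W (1\<^sub>m k)"
  define P1 where "P1 = four_block_mat (1\<^sub>m n) U (0\<^sub>m k n) (1\<^sub>m k)"
  define P2 where "P2 = four_block_mat (1\<^sub>m n) (0\<^sub>m n k) (- W) (1\<^sub>m k)"
  have Mc: "M \<in> carrier_mat (n+k) (n+k)" unfolding M_def by auto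
  have P1c: "P1 \<in> carrier_mat (n+k) (n+k)" unfolding P1_def by auto
  have P2c: "P2 \<in> carrier_mat (n+k) (n+k)" unfolding P2_def by auto
  have UW: "U * W \<in> carrier_mat n n" and WU: "W * U \<in> carrier_mat k k" using U W by auto
  have "M * P1 = four_block_mat (1\<^sub>m n * 1\<^sub>m n + (- U) * 0\<^sub>m k n) (1\<^sub>m n * U + (- U) * 1\<^sub>m k)
      (W * 1\<^sub>m n + 1\<^sub>m k * 0\<^sub>m k n) (W * U + 1\<^sub>m k * 1\<^sub>m k)"
    unfolding M_def P1_def by (rule mult_four_block_mat) (use U W in auto)
  also have "\<dots> = four_block_mat (1\<^sub>m n) (0\<^sub>m n k) W (1\<^sub>m k + W * U)"
    using U W WU by (intro arg_cong4[where f = four_block_mat]) (auto simp: comm_add_mat[of _ k k])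
  finally have MP1: "M * P1 = four_block_mat (1\<^sub>m n) (0\<^sub>m n k) W (1\<^sub>m k + W * U)" .
  have "M * P2 = four_block_mat (1\<^sub>m n * 1\<^sub>m n + (- U) * (- W)) (1\<^sub>m n * 0\<^sub>m n k + (- U) * 1\<^sub>m k)
      (W * 1\<^sub>m n + 1\<^sub>m k * (- W)) (W * 0\<^sub>m n k + 1\<^sub>m k * 1\<^sub>m k)"
    unfolding M_def P2_def by (rule mult_four_block_mat) (use U W in auto)
  also have "\<dots> = four_block_mat (1\<^sub>m n + U * W) (- U) (0\<^sub>m k n) (1\<^sub>m k)"
    using U W UW by (intro arg_cong4[where f = four_block_mat]) auto
  finally have MP2: "M * P2 = four_block_mat (1\<^sub>m n + U * W) (- U) (0\<^sub>m k n) (1\<^sub>m k)" .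
  have d1: "det P1 = 1" unfolding P1_def
    by (subst det_four_block_mat_lower_left_zero[of _ n _ k]) (use U in auto)
  have d2: "det P2 = 1" unfolding P2_def
    by (subst det_four_block_mat_upper_right_zero[of _ n _ k]) (use W in auto)
  have "det M = det (1\<^sub>m k + W * U)"
    using det_mult[OF Mc P1c] d1 unfolding MP1
    by (subst (asm) det_four_block_mat_upper_right_zero[of _ n _ k]) (use W WU in auto)
  moreover have "det M = det (1\<^sub>m n + U * W)"
    using det_mult[OF Mc P2c] d2 unfolding MP2
    by (subst (asm) det_four_block_mat_lower_left_zero[of _ n _ k]) (use U UW in auto)
  ultimately show ?thesis by simp
qed

lemma det_const_add_scalar_diag:
  fixes s y :: "'a :: field_char_0"
  assumes y: "y \<noteq> 0" and k: "0 < k"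
  shows "det (mat k k (\<lambda>(i,j). s + (if i = j then y else 0))) = y^(k-1) * (y + of_nat k * s)"
proof -
  define U where "U = mat k 1 (\<lambda>_. 1::'a)"
  define W where "W = mat 1 k (\<lambda>_. s / y)"
  have U: "U \<in> carrier_mat k 1" and W: "W \<in> carrier_mat 1 k" unfolding U_def W_def by auto
  have eq: "mat k k (\<lambda>(i,j). s + (if i = j then y else 0)) = y \<cdot>\<^sub>m (1\<^sub>m k + U * W)"
    by (rule eq_matI) (use y in \<open>auto simp: U_def W_def scalar_prod_def field_simps\<close>)
  have "det (1\<^sub>m 1 + W * U) = 1 + of_nat k * s / y"
    by (subst det_single) (use U W in \<open>auto simp: U_def W_def scalar_prod_def\<close>)
  hence "det (mat k k (\<lambda>(i,j). s + (if i = j then y else 0))) = y ^ k * (1 + of_nat k * s / y)"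
    unfolding eq using det_one_add_mult_swap[OF U W] W by simp
  also have "\<dots> = y^(k-1) * (y + of_nat k * s)"
  proof -
    have "y ^ k = y^(k-1) * y" using k by (metis Suc_diff_1 power_Suc2)
    thus ?thesis using y by (simp add: field_simps)
  qed
  finally show ?thesis .
qed

lemma smult_mat_mult_vec:
  "A \<in> carrier_mat nr nc \<Longrightarrow> v \<in> carrier_vec nc \<Longrightarrow> (r \<cdot>\<^sub>m A) *\<^sub>v v = r \<cdot>\<^sub>v (A *\<^sub>v v)"
  by (intro eq_vecI) (auto simp: scalar_prod_def sum_distrib_left mult.assoc)

lemma quadratic_form_idempotent:
  assumes A: "(A :: 'a :: comm_ring_1 mat) \<in> carrier_mat n n" and sym: "transpose_mat A = A" and idem: "A * A = A"
    and v: "v \<in> carrier_vec n"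
  shows "v \<bullet> (A *\<^sub>v v) = (A *\<^sub>v v) \<bullet> (A *\<^sub>v v)"
proof -
  have "A *\<^sub>v v = A *\<^sub>v (A *\<^sub>v v)" using assoc_mult_mat_vec[OF A A v] idem by simp
  hence "v \<bullet> (A *\<^sub>v v) = v \<bullet> (A *\<^sub>v (A *\<^sub>v v))" by simp
  also have "\<dots> = (transpose_mat A *\<^sub>v v) \<bullet> (A *\<^sub>v v)"
    by (rule transpose_vec_mult_scalar[of A n n "A *\<^sub>v v" v, symmetric]) (use A v in auto)
  finally show ?thesis using sym by simp
qed

lemma posdef_quadratic_form_nonneg:
  assumes S: "S \<in> carrier_mat n n" and pd: "posdef S" and v: "v \<in> carrier_vec n"
  shows "v \<bullet> (S *\<^sub>v v) \<ge> 0"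
proof (cases "v = 0\<^sub>v n")
  case True thus ?thesis using S by simp
next
  case False thus ?thesis using pd S v unfolding posdef_def by (auto intro: less_imp_le)
qed

lemma posdef_quadratic_form_eq_0:
  assumes S: "S \<in> carrier_mat n n" and pd: "posdef S" and v: "v \<in> carrier_vec n"
    and z: "v \<bullet> (S *\<^sub>v v) = 0"
  shows "v = 0\<^sub>v n"
  using pd S v z unfolding posdef_def by force

definition frobenius_inner :: "nat \<Rightarrow> real mat \<Rightarrow> real mat \<Rightarrow> real" where
  "frobenius_inner n X Y = (\<Sum>i<n. \<Sum>j<n. X $$ (i,j) * Y $$ (i,j))"

lemma frobenius_inner_mult_left:
  assumes D: "D \<in> carrier_mat n n" and S: "S \<in> carrier_mat n n"
  shows "frobenius_inner n D (S * D) = (\<Sum>j<n. col D j \<bullet> (S *\<^sub>v col D j))"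
proof -
  have "frobenius_inner n D (S * D) = (\<Sum>j<n. \<Sum>i<n. D $$ (i,j) * (S * D) $$ (i,j))"
    unfolding frobenius_inner_def by (rule sum.swap)
  also have "\<dots> = (\<Sum>j<n. col D j \<bullet> (S *\<^sub>v col D j))"
    using D S by (intro sum.cong refl) (simp add: scalar_prod_def lessThan_atLeast0)
  finally show ?thesis .
qed

lemma frobenius_inner_mult_right:
  assumes D: "D \<in> carrier_mat n n" and S: "S \<in> carrier_mat n n" and sym: "transpose_mat S = S"
  shows "frobenius_inner n D (D * S) = (\<Sum>i<n. row D i \<bullet> (S *\<^sub>v row D i))"
  unfolding frobenius_inner_def
proof (intro sum.cong refl)
  fix i assume "i \<in> {..<n}" hence i: "i < n" by auto
  have "S $$ (j, l) = S $$ (l, j)" if "j < n" "l < n" for j l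
    using sym that S by (metis carrier_matD(1) carrier_matD(2) index_transpose_mat(1))
  thus "(\<Sum>j<n. D $$ (i, j) * (D * S) $$ (i, j)) = row D i \<bullet> (S *\<^sub>v row D i)"
    using D S i by (simp add: scalar_prod_def lessThan_atLeast0 sum_distrib_left mult.commute mult.left_commute)
qed

text \<open>With \<open>D = S - T\<close> we have \<open>S D + D T = 0\<close>; pairing with \<open>D\<close> gives two nonnegative terms
  with sum zero, and the first one vanishes only if every column of \<open>D\<close> does.\<close>
lemma posdef_sqrt_unique:
  assumes S: "S \<in> carrier_mat n n" and T: "T \<in> carrier_mat n n"
    and sS: "transpose_mat S = S" and sT: "transpose_mat T = T"
    and pS: "posdef S" and pT: "posdef T" and eq: "S * S = T * T"
  shows "S = T"
proof -
  define D where "D = S - T"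
  have Dc: "D \<in> carrier_mat n n" using S T D_def by auto
  have "S * D + D * T = S * S - S * T + (S * T - T * T)"
    unfolding D_def using S T by (simp add: mult_minus_distrib_mat[of _ n n] minus_mult_distrib_mat[of _ n n])
  also have "\<dots> = 0\<^sub>m n n" using S T eq by (intro eq_matI) auto
  finally have z: "S * D + D * T = 0\<^sub>m n n" .
  have "frobenius_inner n D (S * D) + frobenius_inner n D (D * T) = frobenius_inner n D (S * D + D * T)"
    unfolding frobenius_inner_def using S T Dc by (simp add: sum.distrib[symmetric] algebra_simps)
  also have "\<dots> = 0" unfolding z frobenius_inner_def by simp
  finally have sum0: "frobenius_inner n D (S * D) + frobenius_inner n D (D * T) = 0" .
  have rowc: "row D i \<in> carrier_vec n" "col D i \<in> carrier_vec n" for i using Dc by auto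
  have a: "frobenius_inner n D (S * D) \<ge> 0" unfolding frobenius_inner_mult_left[OF Dc S]
    by (intro sum_nonneg posdef_quadratic_form_nonneg[OF S pS] rowc)
  have b: "frobenius_inner n D (D * T) \<ge> 0" unfolding frobenius_inner_mult_right[OF Dc T sT]
    by (intro sum_nonneg posdef_quadratic_form_nonneg[OF T pT] rowc)
  have "(\<Sum>j<n. col D j \<bullet> (S *\<^sub>v col D j)) = 0"
    using a b sum0 unfolding frobenius_inner_mult_left[OF Dc S] by linarith
  hence "\<forall>j\<in>{..<n}. col D j \<bullet> (S *\<^sub>v col D j) = 0"
    by (subst sum_nonneg_eq_0_iff[symmetric]) (auto intro: posdef_quadratic_form_nonneg[OF S pS] rowc)
  hence cz: "col D j = 0\<^sub>v n" if "j < n" for j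
    using posdef_quadratic_form_eq_0[OF S pS rowc(2)] that by auto
  show "S = T"
  proof (rule eq_matI)
    fix i j assume "i < dim_row T" "j < dim_col T"
    hence i: "i < n" and j: "j < n" using T by auto
    have "D $$ (i,j) = 0" using cz[OF j] i j Dc
      by (metis carrier_matD(1) carrier_matD(2) index_col index_zero_vec(1))
    thus "S $$ (i,j) = T $$ (i,j)" using i j S T unfolding D_def by simp
  qed (use S T in auto)
qed

lemma mat_inv_sqrt_eqI:
  assumes A: "A \<in> carrier_mat n n" and S: "S \<in> carrier_mat n n"
    and sS: "transpose_mat S = S" and pS: "posdef S" and inv: "S * S * A = 1\<^sub>m n"
  shows "mat_inv_sqrt A = S"
  unfolding mat_inv_sqrt_def
proof (rule the_equality)
  show "S \<in> carrier_mat (dim_row A) (dim_row A) \<and> transpose_mat S = S \<and> posdef S \<and> S * S * A = 1\<^sub>m (dim_row A)"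
    using A S sS pS inv by auto
  fix R assume "R \<in> carrier_mat (dim_row A) (dim_row A) \<and> transpose_mat R = R \<and> posdef R \<and> R * R * A = 1\<^sub>m (dim_row A)"
  hence Rc: "R \<in> carrier_mat n n" and sR: "transpose_mat R = R" and pR: "posdef R" and iR: "R * R * A = 1\<^sub>m n"
    using A by auto
  have SS: "S * S \<in> carrier_mat n n" using S by auto
  have RR: "R * R \<in> carrier_mat n n" using Rc by auto
  have AS: "A * (S * S) = 1\<^sub>m n" by (rule mat_mult_left_right_inverse[OF SS A inv])
  have "R * R = R * R * (A * (S * S))" using RR AS by (metis right_mult_one_mat)
  also have "\<dots> = (R * R * A) * (S * S)" using RR A SS by (simp add: assoc_mult_mat[of _ n n _ n _ n])
  also have "\<dots> = S * S" using iR SS by (metis left_mult_one_mat)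
  finally show "R = S" using posdef_sqrt_unique[OF Rc S sR sS pR pS] by simp
qed

lemma linear_factors_eq_imp_mset_eq:
  "prod_list (map (\<lambda>a. [:- a, 1:]) xs) = prod_list (map (\<lambda>a. [:- a, 1:]) ys) \<Longrightarrow> mset xs = mset (ys :: 'a :: idom list)"
proof (induction xs arbitrary: ys)
  case Nil
  show ?case
  proof (cases ys)
    case (Cons y ys')
    have "poly (prod_list (map (\<lambda>a. [:- a, 1:]) ys)) y = 0"
      unfolding poly_prod_list_zero_iff using Cons by auto
    thus ?thesis using Nil.prems by simp
  qed simp
next
  case (Cons a xs)
  have "poly (prod_list (map (\<lambda>a. [:- a, 1:]) ys)) a = 0"
    unfolding Cons.prems[symmetric] by simp
  then obtain y where y: "y \<in> set ys" "a = y"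
    unfolding poly_prod_list_zero_iff by auto
  have "[:- a, 1:] * prod_list (map (\<lambda>a. [:- a, 1:]) xs) = [:- a, 1:] * prod_list (map (\<lambda>a. [:- a, 1:]) (remove1 a ys))"
    using Cons.prems prod_list_map_remove1[OF y(1), of "\<lambda>a. [:- a, 1:]"] y(2) by simp
  hence "prod_list (map (\<lambda>a. [:- a, 1:]) xs) = prod_list (map (\<lambda>a. [:- a, 1:]) (remove1 a ys))"
    by (subst (asm) mult_left_cancel) auto
  from Cons.IH[OF this] show ?case using y by simp
qed

lemma sorted_desc_unique:
  fixes xs ys :: "'a :: linorder list"
  assumes "sorted_wrt (\<ge>) xs" "sorted_wrt (\<ge>) ys" "mset xs = mset ys"
  shows "xs = ys"
proof -
  have s: "sorted (rev xs)" "sorted (rev ys)" using assms(1,2) by (simp_all add: sorted_wrt_rev)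
  have "sort (rev ys) = rev xs" by (rule properties_for_sort) (use assms(3) s in auto)
  moreover have "sort (rev ys) = rev ys" by (rule properties_for_sort) (use s in auto)
  ultimately show ?thesis by simp
qed

lemma eigvals_desc_eqI:
  fixes A :: "real mat"
  assumes "length ls = dim_row A" "sorted_wrt (\<ge>) ls" "char_poly A = prod_list (map (\<lambda>a. [:- a, 1:]) ls)"
  shows "eigvals_desc A = ls"
  unfolding eigvals_desc_def
proof (rule the_equality)
  show "length ls = dim_row A \<and> sorted_wrt (\<ge>) ls \<and> char_poly A = prod_list (map (\<lambda>a. [:- a, 1:]) ls)"
    using assms by auto
  fix xs assume "length xs = dim_row A \<and> sorted_wrt (\<ge>) xs \<and> char_poly A = prod_list (map (\<lambda>a. [:- a, 1:]) xs)"
  thus "xs = ls" using assms linear_factors_eq_imp_mset_eq sorted_desc_unique by metis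
qed

section \<open>Matrices that are constant on cluster blocks\<close>

locale equal_clusters =
  fixes n k :: nat and c :: "nat \<Rightarrow> nat"
  assumes k_pos: "0 < k" and n_pos: "0 < n" and k_dvd_n: "k dvd n"
    and cluster_lt: "\<And>j. j < n \<Longrightarrow> c j < k"
    and card_cluster: "\<And>i. i < k \<Longrightarrow> card {j. j < n \<and> c j = i} = n div k"
begin

definition cluster_size :: nat where "cluster_size = n div k"

lemma cluster_size_pos: "0 < cluster_size"
  using k_pos n_pos k_dvd_n unfolding cluster_size_def by (metis dvd_div_eq_0_iff gr0I not_gr0)

lemma n_eq: "real n = real k * real cluster_size"
  using k_dvd_n unfolding cluster_size_def by (metis dvd_mult_div_cancel of_nat_mult)

lemma n_div_k: "real n / real k = real cluster_size"
  using n_eq k_pos by simp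

lemma k_le_n: "k \<le> n"
  using k_dvd_n n_pos by (simp add: dvd_imp_le)

lemma sum_over_cluster:
  assumes "i < k"
  shows "(\<Sum>l<n. if c l = i then (x::real) else 0) = real cluster_size * x"
proof -
  have "{..<n} \<inter> {l. c l = i} = {l. l < n \<and> c l = i}" by auto
  thus ?thesis using card_cluster[OF assms] unfolding cluster_size_def by (simp add: sum.If_cases)
qed

definition block_mat :: "real \<Rightarrow> real \<Rightarrow> real \<Rightarrow> real mat" where
  "block_mat a b g = mat n n (\<lambda>(i,j). a + (if c i = c j then b else 0) + (if i = j then g else 0))"

lemma block_mat_carrier[simp]: "block_mat a b g \<in> carrier_mat n n"
  and block_mat_dims[simp]: "dim_row (block_mat a b g) = n" "dim_col (block_mat a b g) = n"
  unfolding block_mat_def by auto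

lemma block_mat_index[simp]:
  "i < n \<Longrightarrow> j < n \<Longrightarrow> block_mat a b g $$ (i,j) = a + (if c i = c j then b else 0) + (if i = j then g else 0)"
  unfolding block_mat_def by simp

lemma block_mat_mult:
  "block_mat a b g * block_mat a' b' g' =
   block_mat (real n * a * a' + real cluster_size * (a * b' + b * a') + a * g' + g * a')
     (real cluster_size * b * b' + b * g' + g * b') (g * g')"
  (is "_ = ?R")
proof (rule eq_matI)
  fix i j assume "i < dim_row ?R" "j < dim_col ?R"
  hence i: "i < n" and j: "j < n" by auto
  have "(block_mat a b g * block_mat a' b' g') $$ (i,j) = (\<Sum>l<n. block_mat a b g $$ (i,l) * block_mat a' b' g' $$ (l,j))"
    using i j by (simp add: scalar_prod_def lessThan_atLeast0)
  also have "\<dots> = (\<Sum>l<n. a*a' + (if c l = c j then a*b' else 0) + (if l = j then a*g' else 0)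
     + (if c l = c i then b*a' else 0) + (if c l = c i then (if c i = c j then b*b' else 0) else 0)
     + (if l = j then (if c i = c j then b*g' else 0) else 0)
     + (if l = i then g*a' else 0) + (if l = i then (if c i = c j then g*b' else 0) else 0)
     + (if l = i then (if i = j then g*g' else 0) else 0))"
    using i j by (intro sum.cong refl) (auto simp: algebra_simps)
  also have "\<dots> = ?R $$ (i,j)"
    using i j by (simp add: sum.distrib sum_over_cluster cluster_lt algebra_simps)
  finally show "(block_mat a b g * block_mat a' b' g') $$ (i,j) = ?R $$ (i,j)" .
qed auto

text \<open>\<open>spec_mat e1 e2 e3\<close> acts as \<open>e1\<close> on the constant vectors, as \<open>e2\<close> on the cluster
  indicators orthogonal to them, and as \<open>e3\<close> on the vectors summing to zero on every cluster.\<close>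
definition spec_mat :: "real \<Rightarrow> real \<Rightarrow> real \<Rightarrow> real mat" where
  "spec_mat e1 e2 e3 = block_mat ((e1 - e2) / real n) ((e2 - e3) / real cluster_size) e3"

lemma spec_mat_carrier[simp]: "spec_mat e1 e2 e3 \<in> carrier_mat n n"
  and spec_mat_dims[simp]: "dim_row (spec_mat e1 e2 e3) = n" "dim_col (spec_mat e1 e2 e3) = n"
  unfolding spec_mat_def by auto

lemma spec_mat_index[simp]:
  "i < n \<Longrightarrow> j < n \<Longrightarrow> spec_mat e1 e2 e3 $$ (i,j) =
   (e1 - e2) / real n + (if c i = c j then (e2 - e3) / real cluster_size else 0) + (if i = j then e3 else 0)"
  unfolding spec_mat_def by simp

lemma block_mat_eq_spec_mat:
  "block_mat a b g = spec_mat (g + real cluster_size * b + real n * a) (g + real cluster_size * b) g"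
  unfolding spec_mat_def using cluster_size_pos n_pos by simp

lemma spec_mat_mult: "spec_mat e1 e2 e3 * spec_mat f1 f2 f3 = spec_mat (e1 * f1) (e2 * f2) (e3 * f3)"
  unfolding spec_mat_def block_mat_mult using n_pos cluster_size_pos
  by (intro arg_cong3[where f = block_mat]) (simp_all add: field_simps)

lemma spec_mat_add: "spec_mat a b g + spec_mat a' b' g' = spec_mat (a + a') (b + b') (g + g')"
  by (rule eq_matI) (auto simp: add_divide_distrib[symmetric] diff_divide_distrib[symmetric] algebra_simps)

lemma spec_mat_diff: "spec_mat a b g - spec_mat a' b' g' = spec_mat (a - a') (b - b') (g - g')"
  by (rule eq_matI) (auto simp: add_divide_distrib[symmetric] diff_divide_distrib[symmetric] algebra_simps)

lemma spec_mat_uminus: "- spec_mat a b g = spec_mat (-a) (-b) (-g)"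
  by (rule eq_matI) (auto simp: minus_divide_left minus_diff_eq)

lemma spec_mat_smult: "r \<cdot>\<^sub>m spec_mat a b g = spec_mat (r * a) (r * b) (r * g)"
  by (rule eq_matI) (auto simp: algebra_simps)

lemma one_eq_spec_mat: "1\<^sub>m n = spec_mat 1 1 1"
  by (rule eq_matI) auto

lemma spec_mat_transpose: "transpose_mat (spec_mat a b g) = spec_mat a b g"
  by (rule eq_matI) auto

lemma spec_mat_decomp:
  "spec_mat e1 e2 e3 = e1 \<cdot>\<^sub>m spec_mat 1 0 0 + e2 \<cdot>\<^sub>m spec_mat 0 1 0 + e3 \<cdot>\<^sub>m spec_mat 0 0 1"
  unfolding spec_mat_smult spec_mat_add by simp

lemma spec_mat_quadratic_form:
  assumes v: "v \<in> carrier_vec n"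
  obtains q1 q2 q3 where "0 \<le> q1" "0 \<le> q2" "0 \<le> q3" "v \<bullet> v = q1 + q2 + q3"
    and "\<And>e1 e2 e3. v \<bullet> (spec_mat e1 e2 e3 *\<^sub>v v) = e1 * q1 + e2 * q2 + e3 * q3"
proof -
  let ?q = "\<lambda>e1 e2 e3. v \<bullet> (spec_mat e1 e2 e3 *\<^sub>v v)"
  have Pv: "spec_mat a b g *\<^sub>v v \<in> carrier_vec n" for a b g
    by (rule mult_mat_vec_carrier[OF spec_mat_carrier v])
  have lin: "?q e1 e2 e3 = e1 * ?q 1 0 0 + e2 * ?q 0 1 0 + e3 * ?q 0 0 1" for e1 e2 e3
    unfolding spec_mat_decomp[of e1 e2 e3] using v
    by (simp add: add_mult_distrib_mat_vec[of _ n n] smult_mat_mult_vec[OF spec_mat_carrier v]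
      scalar_prod_add_distrib[OF v] Pv)
  have nonneg: "0 \<le> ?q e1 e2 e3" if "e1 * e1 = e1" "e2 * e2 = e2" "e3 * e3 = e3" for e1 e2 e3
  proof -
    have "spec_mat e1 e2 e3 * spec_mat e1 e2 e3 = spec_mat e1 e2 e3" by (simp only: spec_mat_mult that)
    hence "?q e1 e2 e3 = (spec_mat e1 e2 e3 *\<^sub>v v) \<bullet> (spec_mat e1 e2 e3 *\<^sub>v v)"
      by (intro quadratic_form_idempotent[OF spec_mat_carrier spec_mat_transpose _ v])
    thus ?thesis using conjugate_square_ge_0_vec[of "spec_mat e1 e2 e3 *\<^sub>v v"] by simp
  qed
  show thesis
  proof (rule that)
    show "0 \<le> ?q 1 0 0" "0 \<le> ?q 0 1 0" "0 \<le> ?q 0 0 1" by (rule nonneg; simp)+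
    show "v \<bullet> v = ?q 1 0 0 + ?q 0 1 0 + ?q 0 0 1"
      using lin[of 1 1 1] v unfolding one_eq_spec_mat[symmetric] by simp
    show "?q e1 e2 e3 = e1 * ?q 1 0 0 + e2 * ?q 0 1 0 + e3 * ?q 0 0 1" for e1 e2 e3 by (rule lin)
  qed
qed

lemma posdef_spec_mat:
  assumes "e1 > 0" "e2 > 0" "e3 > 0"
  shows "posdef (spec_mat e1 e2 e3)"
  unfolding posdef_def
proof (intro ballI impI)
  fix v :: "real vec"
  assume "v \<in> carrier_vec (dim_row (spec_mat e1 e2 e3))" and "v \<noteq> 0\<^sub>v (dim_row (spec_mat e1 e2 e3))"
  hence v: "v \<in> carrier_vec n" and nz: "v \<noteq> 0\<^sub>v n" by auto
  obtain q1 q2 q3 where q: "0 \<le> q1" "0 \<le> q2" "0 \<le> q3" "v \<bullet> v = q1 + q2 + q3"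
    and qf: "\<And>e1 e2 e3. v \<bullet> (spec_mat e1 e2 e3 *\<^sub>v v) = e1 * q1 + e2 * q2 + e3 * q3"
    using spec_mat_quadratic_form[OF v] by blast
  have "0 < q1 + q2 + q3"
    using conjugate_square_greater_0_vec[OF v] nz unfolding q(4)[symmetric] by simp
  hence "0 < q1 \<or> 0 < q2 \<or> 0 < q3" by linarith
  hence "0 < e1 * q1 \<or> 0 < e2 * q2 \<or> 0 < e3 * q3" using assms by auto
  moreover have "0 \<le> e1 * q1" "0 \<le> e2 * q2" "0 \<le> e3 * q3" using assms q by simp_all
  ultimately show "0 < v \<bullet> (spec_mat e1 e2 e3 *\<^sub>v v)" unfolding qf by linarith
qed

lemma mat_inv_sqrt_spec_mat:
  assumes "e1 > 0" "e2 > 0" "e3 > 0"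
  shows "mat_inv_sqrt (spec_mat e1 e2 e3) = spec_mat (1 / sqrt e1) (1 / sqrt e2) (1 / sqrt e3)"
proof (rule mat_inv_sqrt_eqI[OF spec_mat_carrier spec_mat_carrier spec_mat_transpose])
  show "posdef (spec_mat (1 / sqrt e1) (1 / sqrt e2) (1 / sqrt e3))"
    by (rule posdef_spec_mat) (use assms in auto)
  show "spec_mat (1 / sqrt e1) (1 / sqrt e2) (1 / sqrt e3) * spec_mat (1 / sqrt e1) (1 / sqrt e2) (1 / sqrt e3)
      * spec_mat e1 e2 e3 = 1\<^sub>m n"
    unfolding spec_mat_mult one_eq_spec_mat using assms by (simp add: power_divide)
qed

lemma spec_mat_congruence:
  assumes "l1 > 0" "l2 > 0" "l3 > 0"
  shows "mat_inv_sqrt (spec_mat l1 l2 l3) * spec_mat u1 u2 u3 * mat_inv_sqrt (spec_mat l1 l2 l3)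
    = spec_mat (u1 / l1) (u2 / l2) (u3 / l3)"
  unfolding mat_inv_sqrt_spec_mat[OF assms] spec_mat_mult using assms by (simp add: field_simps)

lemma spec_mat_mult_vec_sq_le:
  assumes v: "v \<in> carrier_vec n" and b: "\<bar>e1\<bar> \<le> M" "\<bar>e2\<bar> \<le> M" "\<bar>e3\<bar> \<le> M"
  shows "(spec_mat e1 e2 e3 *\<^sub>v v) \<bullet> (spec_mat e1 e2 e3 *\<^sub>v v) \<le> M^2 * (v \<bullet> v)"
proof -
  obtain q1 q2 q3 where q: "0 \<le> q1" "0 \<le> q2" "0 \<le> q3" "v \<bullet> v = q1 + q2 + q3"
    and qf: "\<And>e1 e2 e3. v \<bullet> (spec_mat e1 e2 e3 *\<^sub>v v) = e1 * q1 + e2 * q2 + e3 * q3"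
    using spec_mat_quadratic_form[OF v] by blast
  have sq: "e * e \<le> M^2" if "\<bar>e\<bar> \<le> M" for e :: real
    using that abs_le_square_iff[of e M] by (simp add: power2_eq_square)
  have "(spec_mat e1 e2 e3 *\<^sub>v v) \<bullet> (spec_mat e1 e2 e3 *\<^sub>v v) = v \<bullet> (spec_mat e1 e2 e3 *\<^sub>v (spec_mat e1 e2 e3 *\<^sub>v v))"
    using transpose_vec_mult_scalar[OF spec_mat_carrier mult_mat_vec_carrier[OF spec_mat_carrier v] v]
    by (simp add: spec_mat_transpose)
  also have "\<dots> = (e1*e1) * q1 + (e2*e2) * q2 + (e3*e3) * q3"
    unfolding assoc_mult_mat_vec[OF spec_mat_carrier spec_mat_carrier v, symmetric] spec_mat_mult qf ..
  also have "\<dots> \<le> M^2 * q1 + M^2 * q2 + M^2 * q3"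
    using q sq b by (intro add_mono mult_right_mono) auto
  also have "\<dots> = M^2 * (v \<bullet> v)" unfolding q(4) by (simp add: algebra_simps)
  finally show ?thesis .
qed

lemma op_norm_spec_mat_le:
  assumes b: "\<bar>e1\<bar> \<le> M" "\<bar>e2\<bar> \<le> M" "\<bar>e3\<bar> \<le> M"
  shows "op_norm (spec_mat e1 e2 e3) \<le> M"
  unfolding op_norm_def
proof (rule cSup_least)
  have "unit_vec n 0 \<in> carrier_vec (dim_col (spec_mat e1 e2 e3)) \<and> vnorm (unit_vec n 0) = 1"
    using n_pos by (auto simp: vnorm_def)
  thus "{vnorm (spec_mat e1 e2 e3 *\<^sub>v v) |v. v \<in> carrier_vec (dim_col (spec_mat e1 e2 e3)) \<and> vnorm v = 1} \<noteq> {}"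
    by blast
  fix x assume "x \<in> {vnorm (spec_mat e1 e2 e3 *\<^sub>v v) |v. v \<in> carrier_vec (dim_col (spec_mat e1 e2 e3)) \<and> vnorm v = 1}"
  then obtain v where v: "v \<in> carrier_vec n" "vnorm v = 1" and x: "x = vnorm (spec_mat e1 e2 e3 *\<^sub>v v)"
    by auto
  have "0 \<le> v \<bullet> v" using conjugate_square_ge_0_vec[of v] by simp
  hence "v \<bullet> v = 1" using v(2) unfolding vnorm_def by simp
  hence "x \<le> sqrt (M^2)"
    unfolding x vnorm_def by (intro real_sqrt_le_mono) (use spec_mat_mult_vec_sq_le[OF v(1) b] in simp)
  thus "x \<le> M" using b(1) by simp
qed

definition cluster_indicator :: "real mat" where
  "cluster_indicator = mat n k (\<lambda>(i,l). if c i = l then 1 else 0)"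

definition cluster_profile :: "real \<Rightarrow> real \<Rightarrow> real mat" where
  "cluster_profile a b = mat k n (\<lambda>(l,j). a + (if l = c j then b else 0))"

lemma block_mat_eq_one_add_indicator_mult:
  assumes g: "g \<noteq> 0"
  shows "block_mat a b g = g \<cdot>\<^sub>m (1\<^sub>m n + cluster_indicator * cluster_profile (a / g) (b / g))"
    (is "_ = g \<cdot>\<^sub>m (_ + ?U * ?W)")
proof (rule eq_matI)
  fix i j assume "i < dim_row (g \<cdot>\<^sub>m (1\<^sub>m n + ?U * ?W))" "j < dim_col (g \<cdot>\<^sub>m (1\<^sub>m n + ?U * ?W))"
  hence i: "i < n" and j: "j < n" by (auto simp: cluster_indicator_def cluster_profile_def)
  have "(?U * ?W) $$ (i,j) = (\<Sum>l\<in>{0..<k}. (if c i = l then 1 else 0) * (a / g + (if l = c j then b / g else 0)))"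
    using i j by (simp add: scalar_prod_def cluster_indicator_def cluster_profile_def)
  also have "\<dots> = (\<Sum>l\<in>{0..<k}. if c i = l then a / g + (if c i = c j then b / g else 0) else 0)"
    by (intro sum.cong) auto
  also have "\<dots> = a / g + (if c i = c j then b / g else 0)"
    using cluster_lt[OF i] by simp
  finally show "block_mat a b g $$ (i,j) = (g \<cdot>\<^sub>m (1\<^sub>m n + ?U * ?W)) $$ (i,j)"
    using i j g by (simp add: cluster_indicator_def cluster_profile_def field_simps)
qed (auto simp: cluster_indicator_def cluster_profile_def)

lemma cluster_profile_mult_indicator:
  "cluster_profile a b * cluster_indicator =
    mat k k (\<lambda>(l,l'). real cluster_size * a + (if l = l' then real cluster_size * b else 0))"
  (is "_ = ?K")
proof (rule eq_matI)
  fix l l' assume "l < dim_row ?K" "l' < dim_col ?K"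
  hence l: "l < k" and l': "l' < k" by auto
  have "(cluster_profile a b * cluster_indicator) $$ (l,l')
      = (\<Sum>j\<in>{0..<n}. (a + (if l = c j then b else 0)) * (if c j = l' then 1 else 0))"
    using l l' by (simp add: scalar_prod_def cluster_indicator_def cluster_profile_def)
  also have "\<dots> = (\<Sum>j<n. if c j = l' then a + (if l = l' then b else 0) else 0)"
    by (intro sum.cong) auto
  also have "\<dots> = real cluster_size * (a + (if l = l' then b else 0))" by (rule sum_over_cluster[OF l'])
  finally show "(cluster_profile a b * cluster_indicator) $$ (l,l') = ?K $$ (l,l')"
    using l l' by (simp add: algebra_simps)
qed (auto simp: cluster_indicator_def cluster_profile_def)

lemma det_block_mat:
  assumes g: "g \<noteq> 0" and gb: "g + real cluster_size * b \<noteq> 0"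
  shows "det (block_mat a b g) =
    g^(n-k) * (g + real cluster_size * b)^(k-1) * (g + real cluster_size * b + real n * a)"
proof -
  let ?m = "real cluster_size"
  define Y where "Y = 1 + ?m * (b / g)"
  define Z where "Z = Y + real k * (?m * (a / g))"
  have U: "cluster_indicator \<in> carrier_mat n k" and W: "cluster_profile (a / g) (b / g) \<in> carrier_mat k n"
    unfolding cluster_indicator_def cluster_profile_def by auto
  have "1\<^sub>m k + cluster_profile (a / g) (b / g) * cluster_indicator
      = mat k k (\<lambda>(i,j). ?m * (a / g) + (if i = j then Y else 0))"
    unfolding cluster_profile_mult_indicator Y_def by (rule eq_matI) auto
  moreover have "Y \<noteq> 0" using g gb unfolding Y_def by (simp add: field_simps)
  ultimately have "det (block_mat a b g) = g ^ n * (Y ^ (k - 1) * Z)"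
    unfolding block_mat_eq_one_add_indicator_mult[OF g] using det_one_add_mult_swap[OF U W] U W k_pos
    by (simp add: det_const_add_scalar_diag Z_def det_smult)
  also have "g ^ n = g^(n-k) * g^(k-1) * g"
    using k_le_n k_pos by (simp flip: power_add power_Suc2)
  also have "g^(n-k) * g^(k-1) * g * (Y ^ (k - 1) * Z) = g^(n-k) * (g * Y)^(k-1) * (g * Z)"
    by (simp add: power_mult_distrib)
  also have "g * Y = g + ?m * b" unfolding Y_def using g by (simp add: field_simps)
  also have "g * Z = g + ?m * b + real n * a" unfolding Z_def Y_def using g n_eq by (simp add: field_simps)
  finally show ?thesis .
qed

lemma det_spec_mat:
  assumes "e2 \<noteq> 0" "e3 \<noteq> 0"
  shows "det (spec_mat e1 e2 e3) = e1 * e2^(k-1) * e3^(n-k)"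
proof -
  have "real cluster_size * ((e2 - e3) / real cluster_size) = e2 - e3" using cluster_size_pos by simp
  moreover have "real n * ((e1 - e2) / real n) = e1 - e2" using n_pos by simp
  ultimately show ?thesis unfolding spec_mat_def using assms
    by (subst det_block_mat) (simp_all add: algebra_simps)
qed

lemma char_matrix_spec_mat: "- char_matrix (spec_mat t1 t2 t3) x = spec_mat (x - t1) (x - t2) (x - t3)"
  unfolding char_matrix_def spec_mat_dims one_eq_spec_mat spec_mat_smult spec_mat_add spec_mat_uminus
  by simp

text \<open>Both sides are polynomials agreeing outside the finite set \<open>{t2, t3}\<close>.\<close>
lemma char_poly_spec_mat:
  "char_poly (spec_mat t1 t2 t3) = [:-t1,1:] * [:-t2,1:]^(k-1) * [:-t3,1:]^(n-k)"
proof -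
  define p where "p = char_poly (spec_mat t1 t2 t3) - [:-t1,1:] * [:-t2,1:]^(k-1) * [:-t3,1:]^(n-k)"
  have root: "poly p x = 0" if "x \<notin> {t2, t3}" for x
  proof -
    have "poly (char_poly (spec_mat t1 t2 t3)) x = det (spec_mat (x - t1) (x - t2) (x - t3))"
      unfolding char_poly_matrix[OF spec_mat_carrier] char_matrix_spec_mat ..
    also have "\<dots> = (x - t1) * (x - t2)^(k-1) * (x - t3)^(n-k)"
      using that by (subst det_spec_mat) auto
    finally have lhs: "poly (char_poly (spec_mat t1 t2 t3)) x = (x - t1) * (x - t2)^(k-1) * (x - t3)^(n-k)" .
    have rhs: "poly ([:-t1,1:] * [:-t2,1:]^(k-1) * [:-t3,1:]^(n-k)) x
        = (x - t1) * (x - t2)^(k-1) * (x - t3)^(n-k)"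
      by (simp add: poly_power left_diff_distrib)
    show ?thesis by (simp only: p_def poly_diff lhs rhs diff_self)
  qed
  have "p = 0"
  proof (rule ccontr)
    assume "p \<noteq> 0"
    hence "finite {x. poly p x = 0}" by (rule poly_roots_finite)
    moreover have "- {t2, t3} \<subseteq> {x. poly p x = 0}" using root by auto
    ultimately have "finite (- {t2, t3} :: real set)" by (rule finite_subset[rotated])
    thus False by (simp add: infinite_UNIV_char_0)
  qed
  thus ?thesis unfolding p_def by simp
qed

definition spec_list :: "real \<Rightarrow> real \<Rightarrow> real \<Rightarrow> real list" where
  "spec_list t1 t2 t3 = replicate (n-k) t3 @
     (if t1 \<le> t2 then replicate (k-1) t2 @ [t1] else t1 # replicate (k-1) t2)"

lemma eigvals_desc_spec_mat:
  assumes "t1 < t3" "t2 < t3"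
  shows "eigvals_desc (spec_mat t1 t2 t3) = spec_list t1 t2 t3"
proof (rule eigvals_desc_eqI)
  show "length (spec_list t1 t2 t3) = dim_row (spec_mat t1 t2 t3)"
    unfolding spec_list_def using k_le_n k_pos by auto
  have "sorted_wrt (\<ge>) (replicate j (x::real))" for j x by (induction j) auto
  thus "sorted_wrt (\<ge>) (spec_list t1 t2 t3)"
    unfolding spec_list_def using assms by (auto simp: sorted_wrt_append)
  show "char_poly (spec_mat t1 t2 t3) = prod_list (map (\<lambda>a. [:- a, 1:]) (spec_list t1 t2 t3))"
    unfolding char_poly_spec_mat spec_list_def by (auto simp: prod_list_replicate ac_simps)
qed

lemma spec_list_nth_top:
  assumes "k < n"
  shows "spec_list t1 t2 t3 ! (n - k - 1) = t3"
proof -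
  have "n - k - 1 < n - k" using assms by arith
  thus ?thesis unfolding spec_list_def by (simp add: nth_append)
qed

lemma spec_list_nth_gap: "1 < k \<Longrightarrow> spec_list t1 t2 t3 ! (n - k) = max t1 t2"
  unfolding spec_list_def by (cases "k - 1") (auto simp: nth_append)

lemma spec_list_nth_bottom: "j < k \<Longrightarrow> spec_list t1 t2 t3 ! (n - k + j) \<in> {t1, t2}"
  unfolding spec_list_def using k_le_n by (auto simp: nth_append nth_Cons')

lemma Theta_carrier: "Theta n k c \<in> carrier_mat n k"
  unfolding Theta_def by auto

lemma Theta_mult_transpose: "Theta n k c * transpose_mat (Theta n k c) = spec_mat 1 1 0"
proof (rule eq_matI)
  fix i j assume "i < dim_row (spec_mat 1 1 0)" "j < dim_col (spec_mat 1 1 0)"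
  hence i: "i < n" and j: "j < n" by auto
  define r where "r = sqrt (real k / real n)"
  have r2: "r * r = 1 / real cluster_size" unfolding r_def using n_eq k_pos cluster_size_pos by simp
  have "(Theta n k c * transpose_mat (Theta n k c)) $$ (i,j) =
     (\<Sum>l\<in>{0..<k}. (if c i = l then r else 0) * (if c j = l then r else 0))"
    using i j unfolding r_def by (simp add: Theta_def scalar_prod_def)
  also have "\<dots> = (\<Sum>l\<in>{0..<k}. if c i = l then (if c i = c j then r * r else 0) else 0)"
    by (intro sum.cong) auto
  also have "\<dots> = (if c i = c j then 1 / real cluster_size else 0)" using cluster_lt[OF i] r2 by simp
  finally show "(Theta n k c * transpose_mat (Theta n k c)) $$ (i,j) = spec_mat 1 1 0 $$ (i,j)"
    using i j by simp
qed (auto simp: Theta_def)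

text \<open>The eigenvalue equation makes \<open>spec_mat 0 0 1 v\<close> an eigenvector for both \<open>lam\<close> and \<open>t3\<close>.\<close>
lemma spec_mat_eigvec_fixed:
  assumes v: "v \<in> carrier_vec n" and ev: "spec_mat t1 t2 t3 *\<^sub>v v = lam \<cdot>\<^sub>v v" and ne: "lam \<noteq> t3"
  shows "spec_mat 1 1 0 *\<^sub>v v = v"
proof -
  define w where "w = spec_mat 0 0 1 *\<^sub>v v"
  have w: "w \<in> carrier_vec n" unfolding w_def by (rule mult_mat_vec_carrier[OF spec_mat_carrier v])
  have "spec_mat 0 0 1 *\<^sub>v (spec_mat t1 t2 t3 *\<^sub>v v) = spec_mat 0 0 t3 *\<^sub>v v"
    unfolding assoc_mult_mat_vec[OF spec_mat_carrier spec_mat_carrier v, symmetric] spec_mat_mult by simp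
  also have "\<dots> = t3 \<cdot>\<^sub>v w"
    unfolding w_def using smult_mat_mult_vec[OF spec_mat_carrier v, of t3 0 0 1] by (simp add: spec_mat_smult)
  finally have eq: "lam \<cdot>\<^sub>v w = t3 \<cdot>\<^sub>v w"
    unfolding ev w_def by (simp add: mult_mat_vec[OF spec_mat_carrier v])
  have w0: "w = 0\<^sub>v n"
  proof (rule eq_vecI)
    fix i assume i: "i < dim_vec (0\<^sub>v n :: real vec)"
    have "lam * w $ i = t3 * w $ i" using w i arg_cong[OF eq, of "\<lambda>x. x $ i"] by simp
    thus "w $ i = 0\<^sub>v n $ i" using ne i by simp
  qed (use w in simp)
  have "spec_mat 1 1 0 = 1\<^sub>m n - spec_mat 0 0 1" unfolding one_eq_spec_mat spec_mat_diff by simp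
  hence "spec_mat 1 1 0 *\<^sub>v v = v - w" unfolding w_def using v
    by (simp add: minus_mult_distrib_mat_vec[of _ n n])
  thus ?thesis unfolding w0 using v by simp
qed

lemma eigvecs_eq_Theta_mult_orthogonal:
  assumes V: "V \<in> carrier_mat n k" and VV: "transpose_mat V * V = 1\<^sub>m k"
    and ev: "\<And>j. j < k \<Longrightarrow> spec_mat t1 t2 t3 *\<^sub>v col V j = lam j \<cdot>\<^sub>v col V j"
    and ne: "\<And>j. j < k \<Longrightarrow> lam j \<noteq> t3"
  shows "\<exists>R \<in> carrier_mat k k. transpose_mat R * R = 1\<^sub>m k \<and> V = Theta n k c * R"
proof -
  let ?T = "Theta n k c"
  have T: "?T \<in> carrier_mat n k" by (rule Theta_carrier)
  hence TT: "transpose_mat ?T \<in> carrier_mat k n" by simp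
  have fixed: "spec_mat 1 1 0 *\<^sub>v col V j = col V j" if j: "j < k" for j
    using spec_mat_eigvec_fixed[OF _ ev[OF j] ne[OF j]] V j by simp
  define R where "R = transpose_mat ?T * V"
  have R: "R \<in> carrier_mat k k" unfolding R_def using T V by auto
  have V_eq: "V = ?T * R"
  proof (rule mat_col_eqI)
    fix j assume "j < dim_col (?T * R)"
    hence j: "j < k" using R T by auto
    have "col R j = transpose_mat ?T *\<^sub>v col V j" unfolding R_def by (rule col_mult2[OF TT V j])
    hence "col (?T * R) j = ?T *\<^sub>v (transpose_mat ?T *\<^sub>v col V j)"
      unfolding col_mult2[OF T R j] by simp
    also have "\<dots> = (?T * transpose_mat ?T) *\<^sub>v col V j"
      using T V j by (simp add: assoc_mult_mat_vec[of _ n k _ n])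
    also have "\<dots> = col V j" unfolding Theta_mult_transpose by (rule fixed[OF j])
    finally show "col V j = col (?T * R) j" by simp
  qed (use R T V in auto)
  have "transpose_mat R * R = transpose_mat V * (?T * (transpose_mat ?T * V))"
    unfolding R_def using T V by (simp add: transpose_mult[of _ k n _ k] assoc_mult_mat[of _ k n _ k _ k])
  also have "\<dots> = 1\<^sub>m k" using V_eq[unfolded R_def, symmetric] VV by simp
  finally show ?thesis using R V_eq by blast
qed

lemma spec_mat_eigen_conclusion:
  assumes T: "T = spec_mat t1 t2 t3" and Ce: "op_norm Ce \<le> max t1 t2"
    and t1: "t1 < B" and t2: "t2 < B" and B: "B \<le> t3" and "1 < k" "k < n"
  shows "(\<forall>V. is_Vk n k T V \<longrightarrow> (\<exists>R \<in> carrier_mat k k. transpose_mat R * R = 1\<^sub>m k \<and> V = Theta n k c * R))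
     \<and> op_norm Ce < B
     \<and> eigvals_desc T ! (n - k - 1) - eigvals_desc T ! (n - k) > t3 - B"
proof -
  have E: "eigvals_desc T = spec_list t1 t2 t3"
    unfolding T using t1 t2 B by (intro eigvals_desc_spec_mat) auto
  show ?thesis
  proof (intro conjI allI impI)
    fix V assume "is_Vk n k T V"
    hence V: "V \<in> carrier_mat n k" and VV: "transpose_mat V * V = 1\<^sub>m k"
      and ev: "\<And>j. j < k \<Longrightarrow> spec_mat t1 t2 t3 *\<^sub>v col V j = (spec_list t1 t2 t3 ! (n - k + j)) \<cdot>\<^sub>v col V j"
      unfolding is_Vk_def E by (auto simp: T)
    show "\<exists>R \<in> carrier_mat k k. transpose_mat R * R = 1\<^sub>m k \<and> V = Theta n k c * R"
    proof (rule eigvecs_eq_Theta_mult_orthogonal[OF V VV ev])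
      fix j assume "j < k"
      thus "spec_list t1 t2 t3 ! (n - k + j) \<noteq> t3" using spec_list_nth_bottom[of j t1 t2 t3] t1 t2 B by auto
    qed
  next
    show "op_norm Ce < B" using Ce t1 t2 by simp
  next
    show "eigvals_desc T ! (n - k - 1) - eigvals_desc T ! (n - k) > t3 - B"
      unfolding E using spec_list_nth_top[OF \<open>k < n\<close>] spec_list_nth_gap[OF \<open>1 < k\<close>] t1 t2 by simp
  qed
qed

lemma deg_mat_block_mat: "deg_mat (block_mat a b g) = block_mat 0 0 (real n * a + real cluster_size * b + g)"
proof (rule eq_matI)
  fix i j assume "i < dim_row (block_mat 0 0 (real n * a + real cluster_size * b + g))"
    "j < dim_col (block_mat 0 0 (real n * a + real cluster_size * b + g))"
  hence i: "i < n" and j: "j < n" by auto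
  have "(\<Sum>l<n. block_mat a b g $$ (i,l)) = (\<Sum>l<n. a + (if c l = c i then b else 0) + (if l = i then g else 0))"
    using i by (intro sum.cong) auto
  also have "\<dots> = real n * a + real cluster_size * b + g"
    using i by (simp add: sum.distrib sum_over_cluster cluster_lt)
  finally show "deg_mat (block_mat a b g) $$ (i,j) = block_mat 0 0 (real n * a + real cluster_size * b + g) $$ (i,j)"
    using i j by (auto simp: deg_mat_def)
qed (auto simp: deg_mat_def)

lemma deg_mat_spec_mat: "deg_mat (spec_mat e1 e2 e3) = spec_mat e1 e1 e1"
  unfolding spec_mat_def deg_mat_block_mat using n_pos cluster_size_pos by simp

lemma sym_laplacian_spec_mat:
  assumes "e1 > 0"
  shows "sym_laplacian (deg_mat (spec_mat e1 e2 e3)) (spec_mat e1 e2 e3) = spec_mat 0 (1 - e2 / e1) (1 - e3 / e1)"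
  unfolding sym_laplacian_def deg_mat_spec_mat mat_inv_sqrt_spec_mat[OF assms assms assms] spec_mat_mult
    spec_mat_dims one_eq_spec_mat spec_mat_diff
  using assms by (simp add: field_simps)

lemma EAp_eq_spec_mat:
  "EAp n p eta c = spec_mat (dp n k p eta)
     (p * (real cluster_size * (1 - 2*eta)) - p * (1 - eta)) (- (p * (1 - eta)))"
proof -
  have "EAp n p eta c = block_mat (p*eta) (p*(1-eta) - p*eta) (-(p*(1-eta)))"
    by (rule eq_matI) (auto simp: EAp_def)
  thus ?thesis unfolding block_mat_eq_spec_mat dp_def unfolding n_div_k unfolding n_eq by (simp add: algebra_simps)
qed

lemma EAm_eq_spec_mat:
  "EAm n p eta c = spec_mat (dm n k p eta)
     (- (p * eta) - p * (real cluster_size * (1 - 2*eta))) (- (p * eta))"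
proof -
  have "EAm n p eta c = block_mat (p*(1-eta)) (p*eta - p*(1-eta)) (-(p*eta))"
    by (rule eq_matI) (auto simp: EAm_def)
  thus ?thesis unfolding block_mat_eq_spec_mat dm_def unfolding n_div_k unfolding n_eq by (simp add: algebra_simps)
qed

end

section \<open>Scalar estimates for the expected degrees\<close>

text \<open>The coefficients of the identity in \<open>C_e^+\<close> and \<open>C_e^-\<close>; \<open>\<beta>^+/\<beta>^-\<close> is the eigenvalue of
  \<open>T_bar\<close> on the cluster indicators orthogonal to the constant vector.\<close>
definition betap :: "nat \<Rightarrow> nat \<Rightarrow> real \<Rightarrow> real \<Rightarrow> real \<Rightarrow> real" where
  "betap n k p eta taum = 1 + taum + p / dp n k p eta * (1 - eta - real n / real k * (1 - 2*eta))"

definition betam :: "nat \<Rightarrow> nat \<Rightarrow> real \<Rightarrow> real \<Rightarrow> real \<Rightarrow> real" where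
  "betam n k p eta taup = 1 + taup + p / dm n k p eta * (eta + real n / real k * (1 - 2*eta))"

lemma ssbm_degree_bounds:
  assumes p: "0 < p" and eta: "0 \<le> eta" "eta < 1/2" and k: "2 \<le> k"
    and n: "2 * real k * (1 - eta) / (1 - 2*eta) \<le> real n"
  shows "2 \<le> real n / real k" and "p * (1 - eta) \<le> dp n k p eta" and "3/2 * p \<le> dm n k p eta"
proof -
  define m where "m = real n / real k"
  have n_eq: "real n = real k * m" unfolding m_def using k by simp
  have s: "0 < 1 - 2*eta" using eta by simp
  have "2 * (1 - eta) \<le> m * (1 - 2*eta)"
    using n s k unfolding n_eq by (simp add: pos_divide_le_eq mult.commute mult.left_commute)
  moreover have "2 * (1 - 2*eta) \<le> 2 * (1 - eta)" using eta by simp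
  ultimately have m: "2 \<le> m" using s by (meson mult_right_le_imp_le order_trans)
  thus "2 \<le> real n / real k" unfolding m_def .
  have "0 \<le> real n * eta" using eta by simp
  have "1 - eta \<le> m * (1 - 2*eta) + real n * eta - (1 - eta)"
    using \<open>2 * (1 - eta) \<le> m * (1 - 2*eta)\<close> \<open>0 \<le> real n * eta\<close> by simp
  thus "p * (1 - eta) \<le> dp n k p eta" unfolding dp_def m_def[symmetric] using p by simp
  have "2 * (1 - eta) \<le> real k * (1 - eta)" using k eta by (intro mult_right_mono) auto
  hence "1 \<le> real k * (1 - eta) - (1 - 2*eta)" by (simp add: algebra_simps)
  hence "m \<le> m * (real k * (1 - eta) - (1 - 2*eta))" using m by simp
  hence "3/2 \<le> real n * (1 - eta) - m * (1 - 2*eta) - eta" using m eta unfolding n_eq by (simp add: algebra_simps)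
  thus "3/2 * p \<le> dm n k p eta" unfolding dm_def m_def[symmetric] using p by simp
qed

lemma betap_eq:
  assumes "dp n k p eta \<noteq> 0"
  shows "betap n k p eta taum = taum + p * real n * eta / dp n k p eta"
proof -
  have "dp n k p eta + p * (1 - eta - real n / real k * (1 - 2*eta)) = p * real n * eta"
    unfolding dp_def by (simp add: algebra_simps)
  thus ?thesis unfolding betap_def using assms by (simp add: field_simps)
qed

lemma betam_eq:
  assumes "dm n k p eta \<noteq> 0"
  shows "betam n k p eta taup = taup + p * real n * (1 - eta) / dm n k p eta"
proof -
  have "dm n k p eta + p * (eta + real n / real k * (1 - 2*eta)) = p * real n * (1 - eta)"
    unfolding dm_def by (simp add: algebra_simps)
  thus ?thesis unfolding betam_def using assms by (simp add: field_simps)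
qed

lemma divide_mult_diff_add: "p / d * (a - x) + p * x / d = p * a / (d :: 'a :: field)"
  by (simp add: diff_divide_distrib right_diff_distrib)

lemma divide_mult_add: "p / d * (a + x) = p * a / d + p * x / (d :: 'a :: field)"
  by (simp add: add_divide_distrib distrib_left)

lemma alphap_eq_betap_add:
  "alphap n k p eta taum = betap n k p eta taum + p * (real n / real k * (1 - 2*eta)) / dp n k p eta"
  unfolding alphap_def betap_def by (simp only: add.assoc divide_mult_diff_add)

lemma betam_eq_alpham_add:
  "betam n k p eta taup = alpham n k p eta taup + p * (real n / real k * (1 - 2*eta)) / dm n k p eta"
  unfolding alpham_def betam_def by (simp only: add.assoc divide_mult_add)

lemma ssbm_coefficients_pos:
  assumes p: "0 < p" and eta: "0 \<le> eta" "eta < 1/2" and k: "2 \<le> k"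
    and n: "2 * real k * (1 - eta) / (1 - 2*eta) \<le> real n"
    and y: "0 < taup" and x: "0 \<le> taum"
  shows "0 < dp n k p eta" "0 < dm n k p eta" "0 \<le> betap n k p eta taum" "0 < betam n k p eta taup"
    "0 < alpham n k p eta taup" "0 < alphap n k p eta taum"
proof -
  note deg = ssbm_degree_bounds[OF p eta k n]
  have "0 < p * (1 - eta)" using p eta by simp
  thus dp: "0 < dp n k p eta" using deg(2) by linarith
  show dm: "0 < dm n k p eta" using deg(3) p by linarith
  show "0 \<le> betap n k p eta taum" unfolding betap_eq[OF dp[THEN less_imp_neq, symmetric]] using x p eta dp by simp
  have "0 \<le> p * real n * (1 - eta) / dm n k p eta" using p eta dm by simp
  thus "0 < betam n k p eta taup" unfolding betam_eq[OF dm[THEN less_imp_neq, symmetric]] using y by linarith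
  have "0 \<le> p * eta / dm n k p eta" using p eta dm by simp
  thus "0 < alpham n k p eta taup" unfolding alpham_def using y by linarith
  have "0 \<le> p * (1 - eta) / dp n k p eta" using p eta dp by simp
  thus "0 < alphap n k p eta taum" unfolding alphap_def using x by linarith
qed

lemma frac_lt_mult_frac:
  fixes u l b a c :: "'a :: linordered_field"
  assumes "0 \<le> u" "0 < l" "0 \<le> b" "(1 - c) * u < c * a"
  shows "u / (l + b) < c * ((u + a) / l)"
proof -
  have "u / (l + b) \<le> u / l" using assms by (intro divide_left_mono) auto
  also have "\<dots> < c * (u + a) / l" using assms by (intro divide_strict_right_mono) (auto simp: algebra_simps)
  finally show ?thesis by simp
qed

text \<open>The hypotheses come from \<open>\<alpha>^- \<le> 4/3 + \<tau>^+\<close> and \<open>1 + \<tau>^- \<le> \<alpha>^+\<close> for the first ratio, and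
  from \<open>\<alpha>^- \<le> \<beta>^-\<close> and \<open>\<alpha>^+ = \<beta>^+ + p (n/k) (1-2\<eta>) / d^+\<close> for the second.\<close>
lemma ssbm_ratios_lt:
  assumes p: "0 < p" and eta: "0 \<le> eta" "eta < 1/2" and k: "2 \<le> k"
    and n: "2 * real k * (1 - eta) / (1 - 2*eta) \<le> real n"
    and y: "0 < taup" and x: "0 \<le> taum" and c: "0 \<le> c"
    and const: "taum * (4/3 + taup) < c * ((1 + taum) * taup)"
    and cluster: "(1 - c) * (taum * dp n k p eta + p * real n * eta)
      < c * (p * (real n / real k * (1 - 2*eta)))"
  shows "taum / taup < c * (alphap n k p eta taum / alpham n k p eta taup)"
    and "betap n k p eta taum / betam n k p eta taup < c * (alphap n k p eta taum / alpham n k p eta taup)"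
proof -
  note pos = ssbm_coefficients_pos[OF p eta k n y x]
  have "p * eta \<le> p * (1/2)" using p eta by (intro mult_left_mono) auto
  hence "p * eta \<le> dm n k p eta / 3" using ssbm_degree_bounds(3)[OF p eta k n] by linarith
  hence "p * eta / dm n k p eta \<le> 1/3" using pos(2) by (simp add: divide_le_eq)
  hence am_le: "alpham n k p eta taup \<le> 4/3 + taup" unfolding alpham_def by simp
  have ap_ge: "1 + taum \<le> alphap n k p eta taum" unfolding alphap_def using p eta pos(1) by simp
  have "taum * alpham n k p eta taup \<le> taum * (4/3 + taup)" by (rule mult_left_mono[OF am_le x])
  also have "\<dots> < c * ((1 + taum) * taup)" by (rule const)
  also have "\<dots> \<le> c * (alphap n k p eta taum * taup)" using c y ap_ge by (intro mult_left_mono mult_right_mono) auto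
  finally show "taum / taup < c * (alphap n k p eta taum / alpham n k p eta taup)"
    using y pos(5) by (simp add: field_simps)
  define a where "a = p * (real n / real k * (1 - 2*eta)) / dp n k p eta"
  define b where "b = p * (real n / real k * (1 - 2*eta)) / dm n k p eta"
  have b0: "0 \<le> b" unfolding b_def using p eta pos(2) by simp
  have "(1 - c) * betap n k p eta taum = (1 - c) * (taum * dp n k p eta + p * real n * eta) / dp n k p eta"
    unfolding betap_eq[OF pos(1)[THEN less_imp_neq, symmetric]] using pos(1) by (simp add: field_simps)
  also have "\<dots> < c * (p * (real n / real k * (1 - 2*eta))) / dp n k p eta"
    using cluster pos(1) by (rule divide_strict_right_mono)
  finally have "(1 - c) * betap n k p eta taum < c * a" unfolding a_def by simp
  from frac_lt_mult_frac[OF pos(3) pos(5) b0 this]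
  show "betap n k p eta taum / betam n k p eta taup < c * (alphap n k p eta taum / alpham n k p eta taup)"
    unfolding betam_eq_alpham_add alphap_eq_betap_add a_def b_def .
qed

lemma dp_le:
  assumes "0 < p" "eta \<le> 1" "0 < k"
  shows "dp n k p eta \<le> p * (real n / real k) * (1 - 2*eta + real k * eta)"
proof -
  define m where "m = real n / real k"
  have "real n = real k * m" unfolding m_def using assms(3) by simp
  hence "dp n k p eta = p * (m * (1 - 2*eta + real k * eta) - (1 - eta))"
    unfolding dp_def m_def[symmetric] by (simp add: algebra_simps)
  also have "\<dots> \<le> p * (m * (1 - 2*eta + real k * eta))" using assms by (intro mult_left_mono) auto
  finally show ?thesis unfolding m_def by simp
qed

lemma const_ratio_bound_part1:
  fixes taum taup d :: real
  assumes x: "0 \<le> taum" and x1: "taum < 3/2" and x2: "taum < 3/16 * taup" and y: "0 < taup"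
    and d: "d \<le> 1/4"
  shows "taum * (4/3 + taup) < (1 - d) * ((1 + taum) * taup)"
proof -
  define tt where "tt = taum * taup"
  have "tt < 3/2 * taup" unfolding tt_def using x1 y by simp
  have "taum * (4/3 + taup) = 4/3 * taum + tt" unfolding tt_def by (simp add: algebra_simps)
  also have "\<dots> < 3/4 * taup + 3/4 * tt" using \<open>tt < 3/2 * taup\<close> x2 y by linarith
  also have "\<dots> = 3/4 * ((1 + taum) * taup)" unfolding tt_def by (simp add: algebra_simps)
  also have "\<dots> \<le> (1 - d) * ((1 + taum) * taup)" using d x y by (intro mult_right_mono) auto
  finally show ?thesis .
qed

lemma const_ratio_bound_part2:
  fixes taum taup :: real
  assumes x2: "taum < 1/2" and x3: "taum < taup / 8" and y: "0 < taup"
  shows "taum * (4/3 + taup) < 1/2 * ((1 + taum) * taup)"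
proof -
  define tt where "tt = taum * taup"
  have "tt < 1/2 * taup" unfolding tt_def using x2 y by simp
  have "taum * (4/3 + taup) = 4/3 * taum + tt" unfolding tt_def by (simp add: algebra_simps)
  also have "\<dots> < 1/2 * taup + 1/2 * tt" using \<open>tt < 1/2 * taup\<close> x3 y by linarith
  also have "\<dots> = 1/2 * ((1 + taum) * taup)" unfolding tt_def by (simp add: algebra_simps)
  finally show ?thesis .
qed

lemma gap_fraction_le_quarter:
  assumes "0 \<le> eta" "eta < 1/2" "2 \<le> k"
  shows "(1 - 2*eta) / (2 * real k * (1 - eta)) \<le> 1/4"
proof -
  have "2 * 2 * (1 - eta) \<le> 2 * real k * (1 - eta)" using assms by (intro mult_right_mono) auto
  thus ?thesis using assms by (simp add: divide_le_eq)
qed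

lemma cluster_ratio_bound_part1:
  assumes p: "0 < p" and eta: "0 \<le> eta" "eta < 1/2" and k: "2 \<le> k"
    and n: "2 * real k * (1 - eta) / (1 - 2*eta) \<le> real n"
    and x: "0 \<le> taum" and x3: "taum < 3 * (1 - eta) / (8 * (eta + (1 - 2*eta) / real k))"
  defines "d \<equiv> (1 - 2*eta) / (2 * real k * (1 - eta))"
  shows "(1 - (1 - d)) * (taum * dp n k p eta + p * real n * eta)
    < (1 - d) * (p * (real n / real k * (1 - 2*eta)))"
proof -
  define s where "s = 1 - 2*eta"
  define m where "m = real n / real k"
  define P where "P = p * (m * s)"
  have s0: "0 < s" and kpos: "0 < real k" using eta k unfolding s_def by auto
  have m2: "2 \<le> m" unfolding m_def by (rule ssbm_degree_bounds(1)[OF p eta k n])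
  have P0: "0 < P" unfolding P_def using p m2 s0 by simp
  have d0: "0 \<le> d" unfolding d_def using eta by simp
  have d1: "d \<le> 1/4" unfolding d_def by (rule gap_fraction_le_quarter[OF eta k])
  have x3': "taum * (s + real k * eta) \<le> 3 * real k * (1 - eta) / 8"
  proof -
    have "eta + s / real k > 0" using eta s0 kpos by (simp add: add_nonneg_pos)
    hence "taum * (8 * (eta + s / real k)) < 3 * (1 - eta)"
      using x3 unfolding s_def[symmetric] by (simp add: pos_less_divide_eq)
    hence A: "taum * (8 * (eta + s / real k)) * real k < 3 * (1 - eta) * real k" using kpos by simp
    have "taum * (8 * (eta + s / real k)) * real k = 8 * (taum * (s + real k * eta))"
      using kpos by (simp add: field_simps)
    thus ?thesis using A by (simp add: field_simps)
  qed
  have "dp n k p eta \<le> p * m * (s + real k * eta)"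
    using dp_le[of p eta k n] p eta k unfolding m_def s_def by simp
  hence "d * (taum * dp n k p eta) \<le> d * (taum * (p * m * (s + real k * eta)))"
    using d0 x by (intro mult_left_mono) auto
  also have "\<dots> = d * p * m * (taum * (s + real k * eta))" by (simp add: algebra_simps)
  also have "\<dots> \<le> d * p * m * (3 * real k * (1 - eta) / 8)"
    using x3' d0 p m2 by (intro mult_left_mono) auto
  also have "\<dots> = 3/16 * P" unfolding d_def P_def s_def using kpos eta by (simp add: field_simps)
  finally have A: "d * (taum * dp n k p eta) \<le> 3/16 * P" .
  have "d * (p * real n * eta) = P * (eta / (2 * (1 - eta)))"
    unfolding d_def P_def m_def s_def using kpos eta by (simp add: field_simps)
  also have "\<dots> < P * (1/2)" using P0 eta by (intro mult_strict_left_mono) (auto simp: divide_less_eq)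
  finally have B: "d * (p * real n * eta) < P / 2" by simp
  have "(1 - (1 - d)) * (taum * dp n k p eta + p * real n * eta)
      = d * (taum * dp n k p eta) + d * (p * real n * eta)" by (simp add: algebra_simps)
  also have "\<dots> < 3/4 * P" using A B P0 by linarith
  also have "\<dots> \<le> (1 - d) * P" using d1 P0 by (intro mult_right_mono) auto
  finally show ?thesis unfolding P_def m_def s_def .
qed

lemma cluster_ratio_bound_part2:
  assumes p: "0 < p" and eta: "0 \<le> eta" "eta < 1/2" and k: "2 \<le> k"
    and n: "2 * real k * (1 - eta) / (1 - 2*eta) \<le> real n"
    and x: "0 \<le> taum" and x1: "taum < ((1 - 2*eta) / real k - eta) / ((1 - 2*eta) / real k + eta)"
  shows "(1 - 1/2) * (taum * dp n k p eta + p * real n * eta) < 1/2 * (p * (real n / real k * (1 - 2*eta)))"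
proof -
  define s where "s = 1 - 2*eta"
  define m where "m = real n / real k"
  have s0: "0 < s" and kpos: "0 < real k" using eta k unfolding s_def by auto
  have n_eq: "real n = real k * m" unfolding m_def using kpos by simp
  have m2: "2 \<le> m" unfolding m_def by (rule ssbm_degree_bounds(1)[OF p eta k n])
  have x1': "taum * (s + real k * eta) < s - real k * eta"
  proof -
    have "0 < s / real k + eta" using eta kpos s0 by (simp add: add_pos_nonneg)
    hence "taum * (s / real k + eta) < s / real k - eta"
      using x1 unfolding s_def[symmetric] by (simp add: pos_less_divide_eq)
    hence "taum * (s / real k + eta) * real k < (s / real k - eta) * real k" using kpos by simp
    moreover have "taum * (s / real k + eta) * real k = taum * (s + real k * eta)"
      and "(s / real k - eta) * real k = s - real k * eta" using kpos by (simp_all add: field_simps)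
    ultimately show ?thesis by simp
  qed
  have "dp n k p eta \<le> p * m * (s + real k * eta)"
    using dp_le[of p eta k n] p eta k unfolding m_def s_def by simp
  hence "taum * dp n k p eta \<le> taum * (p * m * (s + real k * eta))" using x by (rule mult_left_mono)
  also have "\<dots> = p * m * (taum * (s + real k * eta))" by (simp add: algebra_simps)
  also have "\<dots> < p * m * (s - real k * eta)" using x1' p m2 by (intro mult_strict_left_mono) auto
  finally have "taum * dp n k p eta + p * real n * eta < p * (m * s)" unfolding n_eq by (simp add: algebra_simps)
  thus ?thesis unfolding m_def s_def by simp
qed

lemma ssbm_ratios_lt_part1:
  assumes hyps: "0 < p" "0 \<le> eta" "eta < 1/2" "2 \<le> k" "2 * real k * (1 - eta) / (1 - 2*eta) \<le> real n"
    and y: "0 < taup" and x: "0 \<le> taum" and x1: "taum < 3/2" and x2: "taum < 3/16 * taup"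
    and x3: "taum < 3 * (1 - eta) / (8 * (eta + (1 - 2*eta) / real k))"
  shows "taum / taup < (1 - (1 - 2*eta) / (2 * real k * (1 - eta)))
      * (alphap n k p eta taum / alpham n k p eta taup)"
    and "betap n k p eta taum / betam n k p eta taup < (1 - (1 - 2*eta) / (2 * real k * (1 - eta)))
      * (alphap n k p eta taum / alpham n k p eta taup)"
proof -
  define d where "d = (1 - 2*eta) / (2 * real k * (1 - eta))"
  have "d \<le> 1/4" unfolding d_def by (rule gap_fraction_le_quarter[OF hyps(2-4)])
  note const = const_ratio_bound_part1[OF x x1 x2 y this]
  note cluster = cluster_ratio_bound_part1[OF hyps x x3, folded d_def]
  from ssbm_ratios_lt[OF hyps y x _ const cluster] \<open>d \<le> 1/4\<close>
  show "taum / taup < (1 - (1 - 2*eta) / (2 * real k * (1 - eta)))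
      * (alphap n k p eta taum / alpham n k p eta taup)"
    and "betap n k p eta taum / betam n k p eta taup < (1 - (1 - 2*eta) / (2 * real k * (1 - eta)))
      * (alphap n k p eta taum / alpham n k p eta taup)"
    unfolding d_def by auto
qed

lemma ssbm_ratios_lt_part2:
  assumes hyps: "0 < p" "0 \<le> eta" "eta < 1/2" "2 \<le> k" "2 * real k * (1 - eta) / (1 - 2*eta) \<le> real n"
    and y: "0 < taup" and x: "0 \<le> taum"
    and x1: "taum < ((1 - 2*eta) / real k - eta) / ((1 - 2*eta) / real k + eta)"
    and x2: "taum < 1/2" and x3: "taum < taup / 8"
  shows "taum / taup < alphap n k p eta taum / (2 * alpham n k p eta taup)"
    and "betap n k p eta taum / betam n k p eta taup < alphap n k p eta taum / (2 * alpham n k p eta taup)"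
  using ssbm_ratios_lt[OF hyps y x _ const_ratio_bound_part2[OF x2 x3 y]
      cluster_ratio_bound_part2[OF hyps x x1]]
  by auto

section \<open>The expected signed SBM\<close>

lemma single_cluster: "0 < k \<Longrightarrow> equal_clusters k 1 (\<lambda>_. 0)"
  by unfold_locales auto

lemma chi1_outer_index: "i < k \<Longrightarrow> j < k \<Longrightarrow> chi1_outer k $$ (i,j) = 1 / real k"
  unfolding chi1_outer_def Let_def by (simp add: real_sqrt_mult[symmetric])

lemma chi1_outer_dims[simp]: "dim_row (chi1_outer k) = k" "dim_col (chi1_outer k) = k"
  unfolding chi1_outer_def Let_def by auto

lemma Cep_eq_spec_mat:
  assumes k: "0 < k" and d: "dp n k p eta \<noteq> 0"
  shows "Cep n k p eta taum =
    equal_clusters.spec_mat k 1 (\<lambda>_. 0) taum (betap n k p eta taum) (betap n k p eta taum)"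
proof -
  interpret K: equal_clusters k 1 "\<lambda>_. 0" by (rule single_cluster[OF k])
  have "Cep n k p eta taum = K.block_mat (- p * eta * real n / dp n k p eta / real k) 0 (betap n k p eta taum)"
    by (rule eq_matI) (use k in \<open>auto simp: Cep_def chi1_outer_index betap_def\<close>)
  also have "\<dots> = K.spec_mat taum (betap n k p eta taum) (betap n k p eta taum)"
    unfolding K.block_mat_eq_spec_mat K.cluster_size_def using k by (simp add: betap_eq[OF d])
  finally show ?thesis .
qed

lemma Cem_eq_spec_mat:
  assumes k: "0 < k" and d: "dm n k p eta \<noteq> 0"
  shows "Cem n k p eta taup =
    equal_clusters.spec_mat k 1 (\<lambda>_. 0) taup (betam n k p eta taup) (betam n k p eta taup)"
proof -
  interpret K: equal_clusters k 1 "\<lambda>_. 0" by (rule single_cluster[OF k])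
  have "Cem n k p eta taup = K.block_mat (- p * (1 - eta) * real n / dm n k p eta / real k) 0 (betam n k p eta taup)"
    by (rule eq_matI) (use k in \<open>auto simp: Cem_def chi1_outer_index betam_def\<close>)
  also have "\<dots> = K.spec_mat taup (betam n k p eta taup) (betam n k p eta taup)"
    unfolding K.block_mat_eq_spec_mat K.cluster_size_def using k by (simp add: betam_eq[OF d])
  finally show ?thesis .
qed

lemma op_norm_Ce_mat_le:
  assumes "0 < k" "0 < dp n k p eta" "0 < dm n k p eta" "0 < taup" "0 \<le> taum"
    and "0 \<le> betap n k p eta taum" "0 < betam n k p eta taup"
  shows "op_norm (Ce_mat n k p eta taup taum) \<le> max (taum / taup) (betap n k p eta taum / betam n k p eta taup)"
proof -
  interpret K: equal_clusters k 1 "\<lambda>_. 0" by (rule single_cluster) fact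
  have "Ce_mat n k p eta taup taum = K.spec_mat (taum / taup)
      (betap n k p eta taum / betam n k p eta taup) (betap n k p eta taum / betam n k p eta taup)"
    unfolding Ce_mat_def Cep_eq_spec_mat[OF assms(1) assms(2)[THEN less_imp_neq, symmetric]]
      Cem_eq_spec_mat[OF assms(1) assms(3)[THEN less_imp_neq, symmetric]]
    by (rule K.spec_mat_congruence) (use assms in auto)
  also have "op_norm \<dots> \<le> max (taum / taup) (betap n k p eta taum / betam n k p eta taup)"
    by (rule K.op_norm_spec_mat_le) (use assms in auto)
  finally show ?thesis .
qed

context equal_clusters
begin

lemma T_bar_eq_spec_mat:
  assumes dp: "0 < dp n k p eta" and dm: "0 < dm n k p eta" and "0 < taup"
    and "0 < betam n k p eta taup" "0 < alpham n k p eta taup"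
  shows "T_bar n p eta c taup taum = spec_mat (taum / taup)
    (betap n k p eta taum / betam n k p eta taup) (alphap n k p eta taum / alpham n k p eta taup)"
proof -
  have "Lp_bar n p eta c + taum \<cdot>\<^sub>m 1\<^sub>m n = spec_mat taum (betap n k p eta taum) (alphap n k p eta taum)"
    unfolding Lp_bar_def EAp_eq_spec_mat sym_laplacian_spec_mat[OF dp] one_eq_spec_mat spec_mat_smult spec_mat_add
    using dp by (simp add: betap_def alphap_def n_div_k field_simps)
  moreover have "Lm_bar n p eta c + taup \<cdot>\<^sub>m 1\<^sub>m n = spec_mat taup (betam n k p eta taup) (alpham n k p eta taup)"
    unfolding Lm_bar_def EAm_eq_spec_mat sym_laplacian_spec_mat[OF dm] one_eq_spec_mat spec_mat_smult spec_mat_add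
    using dm by (simp add: betam_def alpham_def n_div_k field_simps)
  ultimately show ?thesis unfolding T_bar_def Let_def using assms(3-5) by (simp add: spec_mat_congruence)
qed

lemma ssbm_spectral_conclusion:
  assumes hyps: "0 < p" "0 \<le> eta" "eta < 1/2" "2 \<le> k" "2 * real k * (1 - eta) / (1 - 2*eta) \<le> real n"
    and y: "0 < taup" and x: "0 \<le> taum"
    and B: "taum / taup < B" "betap n k p eta taum / betam n k p eta taup < B"
    and G: "0 \<le> G" "B + G \<le> alphap n k p eta taum / alpham n k p eta taup"
  shows "(\<forall>V. is_Vk n k (T_bar n p eta c taup taum) V \<longrightarrow>
            (\<exists>R \<in> carrier_mat k k. transpose_mat R * R = 1\<^sub>m k \<and> V = Theta n k c * R))
      \<and> op_norm (Ce_mat n k p eta taup taum) < B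
      \<and> eigvals_desc (T_bar n p eta c taup taum) ! (n - k - 1)
          - eigvals_desc (T_bar n p eta c taup taum) ! (n - k) > G"
proof -
  note pos = ssbm_coefficients_pos[OF hyps y x]
  have "real k < real n" using ssbm_degree_bounds(1)[OF hyps] k_pos by (simp add: le_divide_eq)
  hence k: "1 < k" "k < n" using hyps(4) by auto
  note T = T_bar_eq_spec_mat[OF pos(1,2) y pos(4,5)]
  note Ce = op_norm_Ce_mat_le[OF k_pos pos(1,2) y x pos(3,4)]
  from spec_mat_eigen_conclusion[OF T Ce B _ k] G show ?thesis by auto
qed

lemma ssbm_part1:
  assumes hyps: "0 < p" "0 \<le> eta" "eta < 1/2" "2 \<le> k" "2 * real k * (1 - eta) / (1 - 2*eta) \<le> real n"
    and y: "0 < taup" and x: "0 \<le> taum"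
    and tau: "taum < Min {3/2, 3/16 * taup, 3 * (1 - eta) / (8 * (eta + (1 - 2*eta) / real k))}"
  shows "(\<forall>V. is_Vk n k (T_bar n p eta c taup taum) V \<longrightarrow>
            (\<exists>R \<in> carrier_mat k k. transpose_mat R * R = 1\<^sub>m k \<and> V = Theta n k c * R))
      \<and> op_norm (Ce_mat n k p eta taup taum)
          < (1 - (1 - 2*eta) / (2 * real k * (1 - eta))) * (alphap n k p eta taum / alpham n k p eta taup)
      \<and> eigvals_desc (T_bar n p eta c taup taum) ! (n - k - 1)
          - eigvals_desc (T_bar n p eta c taup taum) ! (n - k)
          > (1 - 2*eta) / (2 * real k * (1 - eta)) * (alphap n k p eta taum / alpham n k p eta taup)"
proof (rule ssbm_spectral_conclusion[OF hyps y x])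
  show "taum / taup < (1 - (1 - 2*eta) / (2 * real k * (1 - eta))) * (alphap n k p eta taum / alpham n k p eta taup)"
    and "betap n k p eta taum / betam n k p eta taup
      < (1 - (1 - 2*eta) / (2 * real k * (1 - eta))) * (alphap n k p eta taum / alpham n k p eta taup)"
    using ssbm_ratios_lt_part1[OF hyps y x] tau by simp_all
  have "0 \<le> (1 - 2*eta) / (2 * real k * (1 - eta))" using hyps by simp
  thus "0 \<le> (1 - 2*eta) / (2 * real k * (1 - eta)) * (alphap n k p eta taum / alpham n k p eta taup)"
    by (rule mult_nonneg_nonneg) (use ssbm_coefficients_pos(5,6)[OF hyps y x] in simp)
qed (simp add: algebra_simps)

lemma ssbm_part2:
  assumes hyps: "0 < p" "0 \<le> eta" "eta < 1/2" "2 \<le> k" "2 * real k * (1 - eta) / (1 - 2*eta) \<le> real n"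
    and y: "0 < taup" and x: "0 \<le> taum"
    and tau: "taum < Min {((1 - 2*eta) / real k - eta) / ((1 - 2*eta) / real k + eta), 1/2, taup / 8}"
  shows "(\<forall>V. is_Vk n k (T_bar n p eta c taup taum) V \<longrightarrow>
            (\<exists>R \<in> carrier_mat k k. transpose_mat R * R = 1\<^sub>m k \<and> V = Theta n k c * R))
      \<and> op_norm (Ce_mat n k p eta taup taum) < alphap n k p eta taum / (2 * alpham n k p eta taup)
      \<and> eigvals_desc (T_bar n p eta c taup taum) ! (n - k - 1)
          - eigvals_desc (T_bar n p eta c taup taum) ! (n - k)
          > alphap n k p eta taum / (2 * alpham n k p eta taup)"
proof (rule ssbm_spectral_conclusion[OF hyps y x])
  show "taum / taup < alphap n k p eta taum / (2 * alpham n k p eta taup)"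
    and "betap n k p eta taum / betam n k p eta taup < alphap n k p eta taum / (2 * alpham n k p eta taup)"
    using ssbm_ratios_lt_part2[OF hyps y x] tau by simp_all
  show "0 \<le> alphap n k p eta taum / (2 * alpham n k p eta taup)"
    using ssbm_coefficients_pos(5,6)[OF hyps y x] by simp
qed simp

end

theorem mainTheorem12:
  fixes n k :: nat and p eta :: real and c :: "nat \<Rightarrow> nat"
  assumes "n \<ge> 2" and "k \<ge> 2"
    and "0 < p" and "p \<le> 1" and "0 \<le> eta" and "eta < 1/2"
    and "k dvd n"
    and "\<forall>j<n. c j < k"
    and "\<forall>i<k. card {j. j < n \<and> c j = i} = n div k"
    and "real n \<ge> 2 * real k * (1 - eta) / (1 - 2*eta)"
  shows
   "(\<forall>taup taum :: real. taup > 0 \<and> taum \<ge> 0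
        \<and> taup > 32 * eta * real k / (3 * (1 - 2*eta))
        \<and> taum < Min {3/2, 3/16 * taup, 3 * (1 - eta) / (8 * (eta + (1 - 2*eta) / real k))}
      \<longrightarrow>
        (\<forall>V. is_Vk n k (T_bar n p eta c taup taum) V \<longrightarrow>
            (\<exists>R \<in> carrier_mat k k. transpose_mat R * R = 1\<^sub>m k \<and> V = Theta n k c * R))
      \<and> op_norm (Ce_mat n k p eta taup taum)
          < (1 - (1 - 2*eta) / (2 * real k * (1 - eta)))
            * (alphap n k p eta taum / alpham n k p eta taup)
      \<and> eigvals_desc (T_bar n p eta c taup taum) ! (n - k - 1)
          - eigvals_desc (T_bar n p eta c taup taum) ! (n - k)
          > (1 - 2*eta) / (2 * real k * (1 - eta))
            * (alphap n k p eta taum / alpham n k p eta taup))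
    \<and>
    (eta < 1 / (3 * real k + 2) \<longrightarrow>
     (\<forall>taup taum :: real. taup > 0 \<and> taum \<ge> 0
        \<and> taum < Min {((1 - 2*eta) / real k - eta) / ((1 - 2*eta) / real k + eta), 1/2, taup / 8}
      \<longrightarrow>
        (\<forall>V. is_Vk n k (T_bar n p eta c taup taum) V \<longrightarrow>
            (\<exists>R \<in> carrier_mat k k. transpose_mat R * R = 1\<^sub>m k \<and> V = Theta n k c * R))
      \<and> op_norm (Ce_mat n k p eta taup taum)
          < alphap n k p eta taum / (2 * alpham n k p eta taup)
      \<and> eigvals_desc (T_bar n p eta c taup taum) ! (n - k - 1)
          - eigvals_desc (T_bar n p eta c taup taum) ! (n - k)
          > alphap n k p eta taum / (2 * alpham n k p eta taup)))"
proof -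
  interpret equal_clusters n k c by unfold_locales (use assms in auto)
  have hyps: "0 < p" "0 \<le> eta" "eta < 1/2" "2 \<le> k" "2 * real k * (1 - eta) / (1 - 2*eta) \<le> real n"
    using assms by auto
  show ?thesis using ssbm_part1[OF hyps] ssbm_part2[OF hyps] by blast
qed

end
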